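(* Let $1\le k<n$ and let $T\colon\mathbb{H}_n\to\mathbb{H}_n$ be a bijective $\mathbb{R}$-linear map. Suppose $P_1,P_2$ are rank-$k$ orthogonal projections with $\operatorname{span}_{\mathbb{R}}S^{\mathbb{H}}(P_1)\neq\operatorname{span}_{\mathbb{R}}S^{\mathbb{H}}(P_2)$, and let $\theta_1,\theta_2\in\{-1,1\}$. Then there do not exist a rank-$k$ orthogonal projection $Q$ and $\theta_3\in\{-1,1\}$ such that $T(\theta_1S^{\mathbb{H}}(P_1))\cup T(\theta_2S^{\mathbb{H}}(P_2))\subseteq\theta_3S^{\mathbb{H}}(Q)$.
   Context: $\mathbb{H}_n$ is the real space of $n\times n$ Hermitian matrices. $w_k(A)=\max\{|\operatorname{tr}(AP)|: P=P^*=P^2,\operatorname{tr}P=k\}$. For a rank-$k$ orthogonal projection $P$, $S^{\mathbb{H}}(P)=\{B\in\mathbb{H}_n:\operatorname{tr}(BP)=w_k(B)\}$. *)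

theory Defs
  imports "HOL-Analysis.Analysis"
begin

text \<open>Complex n x n matrices are represented as complex ^'n ^'n, with n = CARD('n).\<close>

definition mtrace :: "complex ^'n ^'n \<Rightarrow> complex" where
  "mtrace A = (\<Sum>i\<in>UNIV. A $ i $ i)"

definition hermitian :: "complex ^'n ^'n \<Rightarrow> bool" where
  "hermitian A \<longleftrightarrow> (\<forall>i j. A $ i $ j = cnj (A $ j $ i))"

definition Herm :: "(complex ^'n ^'n) set" where
  "Herm = {A. hermitian A}"

definition orth_proj :: "nat \<Rightarrow> complex ^'n ^'n \<Rightarrow> bool" where
  "orth_proj k P \<longleftrightarrow> hermitian P \<and> P ** P = P \<and> mtrace P = of_nat k"

text \<open>w_k(A) = max { |tr(AP)| : P rank-k orthogonal projection } (the max is attained).\<close>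
definition wk :: "nat \<Rightarrow> complex ^'n ^'n \<Rightarrow> real" where
  "wk k A = Sup {cmod (mtrace (A ** P)) | P. orth_proj k P}"

definition SH :: "nat \<Rightarrow> complex ^'n ^'n \<Rightarrow> (complex ^'n ^'n) set" where
  "SH k P = {B \<in> Herm. mtrace (B ** P) = complex_of_real (wk k B)}"

end

theory Submission
  imports Defs
begin

text \<open>
  Unitary conjugation X \<mapsto> V X V* preserves traces, rank-k projections and w_k, so it maps
  S(P) onto S(V P V*). Since any two rank-k projections are unitarily similar (spectral
  theorem), all the spaces span S(P) have one common dimension d. If the inclusion held,
  the injective linear map T would send S(P1) \<union> S(P2) into the d-dimensional space
  span S(Q) (the signs \<theta>i do not affect spans), so span (S(P1) \<union> S(P2)) would have
  dimension at most d while containing both d-dimensional spaces span S(Pi); they would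
  then coincide.
\<close>

definition adj :: "complex^'n^'m \<Rightarrow> complex^'m^'n" where
  "adj A = (\<chi> i j. cnj (A $ j $ i))"

definition unitary :: "complex^'n^'n \<Rightarrow> bool" where
  "unitary U \<longleftrightarrow> U ** adj U = mat 1 \<and> adj U ** U = mat 1"

lemma adj_nth [simp]: "adj A $ i $ j = cnj (A $ j $ i)"
  by (simp add: adj_def)

lemma adj_adj [simp]: "adj (adj A) = A"
  by (simp add: vec_eq_iff)

lemma adj_add: "adj (A + B) = adj A + adj B"
  by (simp add: vec_eq_iff)

lemma adj_scaleR: "adj (r *\<^sub>R A) = r *\<^sub>R adj A"
  by (simp add: vec_eq_iff complex_cnj_scaleR)

lemma adj_mult: "adj (A ** B) = adj B ** adj A"
  by (simp add: vec_eq_iff matrix_matrix_mult_def mult.commute)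

lemma hermitian_iff_adj: "hermitian A \<longleftrightarrow> adj A = A"
  unfolding hermitian_def vec_eq_iff adj_nth by (metis complex_cnj_cnj)

lemma mtrace_mult_commute: "mtrace ((A::complex^'n^'n) ** B) = mtrace (B ** A)"
  unfolding mtrace_def matrix_matrix_mult_def
  by (simp add: mult.commute) (rule sum.swap)

lemma matrix_add_rdistrib: "(B + C) ** A = B ** A + C ** A"
  by (vector matrix_matrix_mult_def sum.distrib[symmetric] field_simps)

lemma unitary_adj: "unitary U \<Longrightarrow> unitary (adj U)"
  by (simp add: unitary_def)

lemma unitary_adj_mult_cancel: "unitary U \<Longrightarrow> X ** adj U ** U = X"
  by (metis matrix_mul_assoc matrix_mul_rid unitary_def)

lemma unitary_mult_adj_cancel: "unitary U \<Longrightarrow> X ** U ** adj U = X"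
  by (metis matrix_mul_assoc matrix_mul_rid unitary_def)

lemma unitary_mult: "unitary U \<Longrightarrow> unitary V \<Longrightarrow> unitary (U ** V)"
  by (simp add: unitary_def adj_mult matrix_mul_assoc unitary_mult_adj_cancel unitary_adj_mult_cancel)

lemma unitary_conj_cancel: "unitary V \<Longrightarrow> adj V ** (V ** X ** adj V) ** V = X"
  by (metis matrix_mul_assoc matrix_mul_lid unitary_def unitary_mult_adj_cancel)

lemma mtrace_unitary_conj: "unitary V \<Longrightarrow> mtrace (V ** A ** adj V) = mtrace A"
  by (metis matrix_mul_assoc mtrace_mult_commute unitary_adj_mult_cancel matrix_mul_lid)

lemma hermitian_conj: "hermitian X \<Longrightarrow> hermitian (V ** X ** adj V)"
  by (simp add: hermitian_iff_adj adj_mult matrix_mul_assoc)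

lemma orth_proj_unitary_conj:
  fixes V :: "complex^'n^'n"
  assumes "unitary V" "orth_proj k P"
  shows "orth_proj k (V ** P ** adj V)"
proof -
  have "V ** P ** adj V ** (V ** P ** adj V) = V ** (P ** P) ** adj V"
    using assms(1) by (simp add: matrix_mul_assoc unitary_adj_mult_cancel)
  then show ?thesis
    using assms by (simp add: orth_proj_def hermitian_conj mtrace_unitary_conj)
qed

lemma wk_values_unitary_conj_subset:
  fixes V X :: "complex^'n^'n"
  assumes "unitary V"
  shows "{cmod (mtrace (V ** X ** adj V ** P)) | P. orth_proj k P}
           \<subseteq> {cmod (mtrace (X ** Q)) | Q. orth_proj k Q}"
proof safe
  fix P :: "complex^'n^'n" assume P: "orth_proj k P"
  have "V ** X ** adj V ** P = V ** (X ** (adj V ** P ** V)) ** adj V"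
    using assms by (simp add: matrix_mul_assoc unitary_mult_adj_cancel)
  then have "mtrace (V ** X ** adj V ** P) = mtrace (X ** (adj V ** P ** V))"
    using assms by (simp add: mtrace_unitary_conj)
  moreover have "orth_proj k (adj V ** P ** V)"
    using orth_proj_unitary_conj[OF unitary_adj[OF assms] P] by simp
  ultimately show "\<exists>Q. cmod (mtrace (V ** X ** adj V ** P)) = cmod (mtrace (X ** Q)) \<and> orth_proj k Q"
    by auto
qed

lemma wk_unitary_conj:
  fixes V :: "complex^'n^'n"
  assumes "unitary V"
  shows "wk k (V ** X ** adj V) = wk k X"
proof -
  have "{cmod (mtrace (X ** Q)) | Q. orth_proj k Q}
          \<subseteq> {cmod (mtrace (V ** X ** adj V ** P)) | P. orth_proj k P}"
    using wk_values_unitary_conj_subset[OF unitary_adj[OF assms], of "V ** X ** adj V" k]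
    by (simp add: unitary_conj_cancel[OF assms])
  with wk_values_unitary_conj_subset[OF assms, of X k] show ?thesis
    unfolding wk_def by (metis (no_types, lifting) subset_antisym)
qed

lemma SH_unitary_conj_subset:
  fixes V :: "complex^'n^'n"
  assumes "unitary V" "B \<in> SH k P"
  shows "V ** B ** adj V \<in> SH k (V ** P ** adj V)"
proof -
  have "V ** B ** adj V ** (V ** P ** adj V) = V ** (B ** P) ** adj V"
    using assms by (simp add: matrix_mul_assoc unitary_adj_mult_cancel)
  then show ?thesis
    using assms by (simp add: SH_def Herm_def hermitian_conj mtrace_unitary_conj wk_unitary_conj)
qed

lemma SH_unitary_conj:
  fixes V :: "complex^'n^'n"
  assumes "unitary V"
  shows "SH k (V ** P ** adj V) = (\<lambda>B. V ** B ** adj V) ` SH k P"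
proof
  show "SH k (V ** P ** adj V) \<subseteq> (\<lambda>B. V ** B ** adj V) ` SH k P"
  proof
    fix C assume "C \<in> SH k (V ** P ** adj V)"
    then have "adj V ** C ** V \<in> SH k P"
      using SH_unitary_conj_subset[OF unitary_adj[OF assms]] by (force simp: unitary_conj_cancel[OF assms])
    moreover have "C = V ** (adj V ** C ** V) ** adj V"
      using unitary_conj_cancel[OF unitary_adj[OF assms]] by simp
    ultimately show "C \<in> (\<lambda>B. V ** B ** adj V) ` SH k P" by blast
  qed
qed (use SH_unitary_conj_subset[OF assms] in blast)

lemma dim_span_SH_unitary_conj:
  fixes V :: "complex^'n^'n"
  assumes "unitary V"
  shows "dim (span (SH k (V ** P ** adj V))) = dim (span (SH k P))"
proof -
  have "linear (\<lambda>B::complex^'n^'n. V ** B ** adj V)"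
    by (rule linearI)
      (simp_all add: matrix_add_ldistrib matrix_add_rdistrib matrix_scalar_ac scalar_matrix_assoc)
  moreover have "inj (\<lambda>B::complex^'n^'n. V ** B ** adj V)"
    by (metis (no_types, lifting) injI unitary_conj_cancel[OF assms])
  ultimately have "dim ((\<lambda>B. V ** B ** adj V) ` SH k P) = dim (SH k P)"
    by (metis dim_image_eq inj_on_subset subset_UNIV)
  then show ?thesis
    unfolding dim_span SH_unitary_conj[OF assms] .
qed

definition cinner :: "complex^'n \<Rightarrow> complex^'n \<Rightarrow> complex" where
  "cinner x y = (\<Sum>i\<in>UNIV. cnj (x $ i) * y $ i)"

lemma cinner_zero_left [simp]: "cinner 0 y = 0"
  by (simp add: cinner_def)

lemma cinner_zero_right [simp]: "cinner x 0 = 0"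
  by (simp add: cinner_def)

lemma cnj_cinner: "cnj (cinner x y) = cinner y x"
  by (simp add: cinner_def mult.commute)

lemma cinner_diff_right: "cinner x (y - z) = cinner x y - cinner x z"
  by (simp add: cinner_def right_diff_distrib sum_subtractf)

lemma cinner_sum_right: "cinner x (\<Sum>s\<in>S. f s) = (\<Sum>s\<in>S. cinner x (f s))"
  unfolding cinner_def by (simp add: sum_distrib_left) (rule sum.swap)

lemma cinner_smult_right: "cinner x (c *s y) = c * cinner x y"
  by (simp add: cinner_def sum_distrib_left mult_ac)

lemma cinner_smult_left: "cinner (c *s x) y = cnj c * cinner x y"
  by (simp add: cinner_def sum_distrib_left mult_ac)

lemma cinner_scaleR_right: "cinner x (r *\<^sub>R y) = of_real r * cinner x y"
  by (simp add: cinner_def scaleR_conv_of_real[where 'a=complex] sum_distrib_left mult_ac)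

lemma cinner_adj_right: "cinner x (A *v y) = cinner (adj A *v x) y"
  unfolding cinner_def matrix_vector_mult_def
  by (simp add: sum_distrib_left sum_distrib_right mult_ac) (rule sum.swap)

lemma cinner_self: "cinner z z = of_real ((norm z)\<^sup>2)"
proof -
  have "(norm z)\<^sup>2 = (\<Sum>i\<in>UNIV. (norm (z $ i))\<^sup>2)"
    unfolding norm_vec_def L2_set_def by (simp add: sum_nonneg)
  then have "of_real ((norm z)\<^sup>2) = (\<Sum>i\<in>UNIV. of_real ((norm (z $ i))\<^sup>2) :: complex)"
    by simp
  then show ?thesis
    unfolding cinner_def complex_norm_square by (simp add: mult.commute)
qed

lemma cinner_axis: "cinner s (axis j 1) = cnj (s $ j)"
  by (simp add: cinner_def axis_def if_distrib if_distribR cong: if_cong)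

definition orthonormal_eigvecs :: "complex^'n^'n \<Rightarrow> (complex^'n) set \<Rightarrow> bool" where
  "orthonormal_eigvecs P S \<longleftrightarrow> finite S \<and>
     (\<forall>s\<in>S. \<forall>t\<in>S. cinner s t = (if s = t then 1 else 0)) \<and>
     (\<forall>s\<in>S. P *v s = s \<or> P *v s = 0)"

lemma orthonormal_eigvecs_card_le:
  fixes S :: "(complex^'n) set"
  assumes "orthonormal_eigvecs P S"
  shows "card S \<le> DIM(complex^'n)"
proof -
  have "independent S"
  proof (rule real_vector.independent_if_scalars_zero)
    show "finite S" using assms by (simp add: orthonormal_eigvecs_def)
  next
    fix f x assume sum: "(\<Sum>y\<in>S. f y *\<^sub>R y) = 0" and x: "x \<in> S"
    have "cinner x (\<Sum>y\<in>S. f y *\<^sub>R y) = (\<Sum>y\<in>S. of_real (f y) * cinner x y)"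
      by (simp add: cinner_sum_right cinner_scaleR_right)
    also have "\<dots> = (\<Sum>y\<in>S. if y = x then of_real (f y) else 0)"
      by (rule sum.cong) (use assms x in \<open>auto simp: orthonormal_eigvecs_def\<close>)
    also have "\<dots> = of_real (f x)"
      using assms x by (simp add: orthonormal_eigvecs_def)
    finally show "f x = 0" using sum by simp
  qed
  then show ?thesis using independent_bound[of S] by simp
qed

lemma orthonormal_eigvecs_extend:
  assumes herm: "hermitian P" and idem: "P ** P = P" and S: "orthonormal_eigvecs P S"
    and "y \<noteq> 0" and orth: "\<forall>t\<in>S. cinner t y = 0"
  obtains w where "w \<notin> S" "orthonormal_eigvecs P (insert w S)"
proof -
  \<comment> \<open>Either y or P y is a nonzero eigenvector; P y stays orthogonal to S as P is self-adjoint.\<close>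
  obtain z where z: "z \<noteq> 0" "\<forall>t\<in>S. cinner t z = 0" "P *v z = z \<or> P *v z = 0"
  proof (cases "P *v y = 0")
    case True
    then show ?thesis using that[of y] assms by blast
  next
    case False
    have "cinner t (P *v y) = 0" if "t \<in> S" for t
    proof -
      have "cinner t (P *v y) = cinner (P *v t) y"
        using herm by (simp add: cinner_adj_right hermitian_iff_adj)
      moreover have "P *v t = t \<or> P *v t = 0"
        using S that by (simp add: orthonormal_eigvecs_def)
      ultimately show ?thesis using orth that by auto
    qed
    moreover have "P *v (P *v y) = P *v y"
      by (simp add: matrix_vector_mul_assoc idem)
    ultimately show ?thesis using that[of "P *v y"] False by blast
  qed
  define w where "w = of_real (1 / norm z) *s z"
  have "norm z \<noteq> 0" using z(1) by simp
  then have ww: "cinner w w = 1"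
    unfolding w_def cinner_smult_left cinner_smult_right
    by (simp add: cinner_self power2_eq_square)
  have tw: "\<forall>t\<in>S. cinner t w = 0"
    using z(2) by (simp add: w_def cinner_smult_right)
  then have wt: "\<forall>t\<in>S. cinner w t = 0"
    by (metis cnj_cinner complex_cnj_zero)
  have "P *v w = of_real (1 / norm z) *s (P *v z)"
    by (simp add: w_def vector_scalar_commute)
  then have Pw: "P *v w = w \<or> P *v w = 0"
    using z(3) by (auto simp: w_def)
  have "w \<notin> S" using ww tw by (metis zero_neq_one)
  moreover have "orthonormal_eigvecs P (insert w S)"
    using S ww tw wt Pw \<open>w \<notin> S\<close> unfolding orthonormal_eigvecs_def by (simp; blast)
  ultimately show ?thesis using that by blast
qed

lemma maximal_orthonormal_eigvecs_expansion:
  assumes herm: "hermitian P" and idem: "P ** P = P" and S: "orthonormal_eigvecs P S"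
    and max: "\<And>S'. orthonormal_eigvecs P S' \<Longrightarrow> card S' \<le> card S"
  shows "x = (\<Sum>s\<in>S. cinner s x *s s)"
proof (rule ccontr)
  define y where "y = x - (\<Sum>s\<in>S. cinner s x *s s)"
  assume "x \<noteq> (\<Sum>s\<in>S. cinner s x *s s)"
  then have "y \<noteq> 0" by (simp add: y_def)
  moreover have "\<forall>t\<in>S. cinner t y = 0"
  proof
    fix t assume t: "t \<in> S"
    have "(\<Sum>s\<in>S. cinner s x * cinner t s) = (\<Sum>s\<in>S. if s = t then cinner t x else 0)"
      by (rule sum.cong) (use S t in \<open>auto simp: orthonormal_eigvecs_def\<close>)
    also have "\<dots> = cinner t x"
      using S t by (simp add: orthonormal_eigvecs_def)
    finally show "cinner t y = 0"
      by (simp add: y_def cinner_diff_right cinner_sum_right cinner_smult_right)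
  qed
  ultimately obtain w where "w \<notin> S" "orthonormal_eigvecs P (insert w S)"
    using orthonormal_eigvecs_extend[OF herm idem S] by blast
  then show False
    using max[of "insert w S"] S by (simp add: orthonormal_eigvecs_def)
qed

lemma orthonormal_eigenbasis_exists:
  fixes P :: "complex^'n^'n"
  assumes herm: "hermitian P" and idem: "P ** P = P"
  obtains S where "orthonormal_eigvecs P S"
    and "\<And>i j. (\<Sum>s\<in>S. s $ i * cnj (s $ j)) = (if i = j then 1 else 0)"
proof -
  define M where "M = {card S | S. orthonormal_eigvecs P S}"
  have "M \<subseteq> {..DIM(complex^'n)}"
    using orthonormal_eigvecs_card_le by (auto simp: M_def)
  then have "finite M" by (rule finite_subset) simp
  moreover have "0 \<in> M"
    unfolding M_def by (rule CollectI, rule exI[of _ "{}"]) (simp add: orthonormal_eigvecs_def)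
  ultimately have "Max M \<in> M" by (intro Max_in) auto
  then obtain S where S: "orthonormal_eigvecs P S" and "card S = Max M"
    by (auto simp: M_def)
  with \<open>finite M\<close> have max: "card S' \<le> card S" if "orthonormal_eigvecs P S'" for S'
    using that by (auto simp: M_def intro: Max_ge)
  have "(\<Sum>s\<in>S. s $ i * cnj (s $ j)) = (if i = j then 1 else 0)" for i j
  proof -
    have "(axis j 1 :: complex^'n) = (\<Sum>s\<in>S. cinner s (axis j 1) *s s)"
      by (rule maximal_orthonormal_eigvecs_expansion[OF herm idem S max])
    then have "(axis j 1 :: complex^'n) $ i = (\<Sum>s\<in>S. cinner s (axis j 1) *s s) $ i"
      by simp
    then show ?thesis
      unfolding cinner_axis by (simp add: axis_def mult.commute)
  qed
  with S show ?thesis using that by blast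
qed

lemma projection_eq_sum_eigvecs:
  assumes S: "orthonormal_eigvecs P S"
    and complete: "\<And>i j. (\<Sum>s\<in>S. s $ i * cnj (s $ j)) = (if i = j then 1 else 0)"
  shows "P $ i $ j = (\<Sum>s\<in>{s\<in>S. P *v s = s}. s $ i * cnj (s $ j))"
proof -
  have "P $ i $ j = (\<Sum>m\<in>UNIV. P $ i $ m * (\<Sum>s\<in>S. s $ m * cnj (s $ j)))"
    by (simp add: complete if_distrib if_distribR cong: if_cong)
  also have "\<dots> = (\<Sum>s\<in>S. (P *v s) $ i * cnj (s $ j))"
    by (simp add: matrix_vector_mult_def sum_distrib_left sum_distrib_right mult.assoc)
      (rule sum.swap)
  also have "\<dots> = (\<Sum>s\<in>S. if P *v s = s then s $ i * cnj (s $ j) else 0)"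
    by (rule sum.cong) (use S in \<open>auto simp: orthonormal_eigvecs_def\<close>)
  also have "\<dots> = (\<Sum>s\<in>{s\<in>S. P *v s = s}. s $ i * cnj (s $ j))"
    using S by (simp add: sum.inter_filter orthonormal_eigvecs_def)
  finally show ?thesis .
qed

lemma sum_orthonormal_eigvecs_diagonal:
  assumes "orthonormal_eigvecs P S" "R \<subseteq> S"
  shows "(\<Sum>i\<in>UNIV. \<Sum>s\<in>R. s $ i * cnj (s $ i)) = of_nat (card R)"
proof -
  have "(\<Sum>i\<in>UNIV. \<Sum>s\<in>R. s $ i * cnj (s $ i)) = (\<Sum>s\<in>R. cinner s s)"
    by (subst sum.swap) (simp add: cinner_def mult.commute)
  also have "\<dots> = (\<Sum>s\<in>R. 1)"
    using assms by (intro sum.cong) (auto simp: orthonormal_eigvecs_def)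
  finally show ?thesis by simp
qed

lemma obtain_bij_betw_mapping_subset:
  fixes K :: "'a::finite set"
  assumes "finite S" "R \<subseteq> S" "card S = CARD('a)" "card K = card R"
  obtains \<sigma> where "bij_betw \<sigma> UNIV S" "bij_betw \<sigma> K R"
proof -
  have "finite R" using assms(1,2) by (rule finite_subset[rotated])
  then obtain f where f: "bij_betw f K R"
    using finite_same_card_bij[of K R] assms(4) by auto
  have "card (UNIV - K) = card (S - R)"
    using assms \<open>finite R\<close> by (simp add: card_Diff_subset)
  then obtain g where g: "bij_betw g (UNIV - K) (S - R)"
    using finite_same_card_bij[of "UNIV - K" "S - R"] assms(1) by auto
  define \<sigma> where "\<sigma> j = (if j \<in> K then f j else g j)" for j
  have "bij_betw \<sigma> K R"
    using f by (rule bij_betw_cong[THEN iffD1, rotated]) (simp add: \<sigma>_def)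
  moreover have "bij_betw \<sigma> (UNIV - K) (S - R)"
    using g by (rule bij_betw_cong[THEN iffD1, rotated]) (simp add: \<sigma>_def)
  ultimately have "bij_betw \<sigma> (K \<union> (UNIV - K)) (R \<union> (S - R))"
    by (rule bij_betw_combine) auto
  moreover have "K \<union> (UNIV - K) = UNIV" "R \<union> (S - R) = S"
    using assms(2) by auto
  ultimately show ?thesis
    using that \<open>bij_betw \<sigma> K R\<close> by simp
qed

lemma unitary_of_orthonormal_columns:
  assumes \<sigma>: "bij_betw \<sigma> UNIV S"
    and orthonormal: "\<forall>s\<in>S. \<forall>t\<in>S. cinner s t = (if s = t then 1 else 0)"
    and complete: "\<And>i j. (\<Sum>s\<in>S. s $ i * cnj (s $ j)) = (if i = j then 1 else 0)"
  shows "unitary (\<chi> i j. \<sigma> j $ i)"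
proof -
  have "(\<Sum>j\<in>UNIV. \<sigma> j $ i * cnj (\<sigma> j $ l)) = (if i = l then 1 else 0)" for i l
    using sum.reindex_bij_betw[OF \<sigma>, of "\<lambda>s. s $ i * cnj (s $ l)"] complete by simp
  moreover have "(\<Sum>i\<in>UNIV. cnj (\<sigma> j $ i) * \<sigma> l $ i) = (if j = l then 1 else 0)" for j l
  proof -
    have "\<sigma> j \<in> S" "\<sigma> l \<in> S" "\<sigma> j = \<sigma> l \<longleftrightarrow> j = l"
      using \<sigma> by (auto simp: bij_betw_def inj_eq)
    then show ?thesis
      using orthonormal by (simp add: cinner_def)
  qed
  ultimately show ?thesis
    by (simp add: unitary_def vec_eq_iff matrix_matrix_mult_def mat_def)
qed

definition coord_proj :: "'n set \<Rightarrow> complex^'n^'n" where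
  "coord_proj K = (\<chi> i j. if i = j \<and> i \<in> K then 1 else 0)"

lemma coord_proj_conj_nth:
  "(U ** coord_proj K ** adj U) $ i $ l = (\<Sum>j\<in>K. U $ i $ j * cnj (U $ l $ j))"
proof -
  have D: "(U ** coord_proj K) $ i $ j = (if j \<in> K then U $ i $ j else 0)" for j
  proof -
    have "(\<Sum>m\<in>UNIV. U $ i $ m * (if m = j \<and> m \<in> K then 1 else 0))
            = (\<Sum>m\<in>UNIV. if m = j then (if j \<in> K then U $ i $ j else 0) else 0)"
      by (rule sum.cong) auto
    then show ?thesis by (simp add: coord_proj_def matrix_matrix_mult_def)
  qed
  have "(U ** coord_proj K ** adj U) $ i $ l = (\<Sum>j\<in>UNIV. (U ** coord_proj K) $ i $ j * cnj (U $ l $ j))"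
    by (subst matrix_matrix_mult_def) simp
  also have "\<dots> = (\<Sum>j\<in>UNIV. if j \<in> K then U $ i $ j * cnj (U $ l $ j) else 0)"
    unfolding D by (rule sum.cong) auto
  also have "\<dots> = (\<Sum>j\<in>K. U $ i $ j * cnj (U $ l $ j))"
    by (simp add: sum.If_cases)
  finally show ?thesis .
qed

lemma orth_proj_unitarily_diagonal:
  fixes P :: "complex^'n^'n"
  assumes "orth_proj k P" "card K = k"
  obtains U where "unitary U" "P = U ** coord_proj K ** adj U"
proof -
  have herm: "hermitian P" and idem: "P ** P = P" and tr: "mtrace P = of_nat k"
    using assms(1) by (auto simp: orth_proj_def)
  obtain S where S: "orthonormal_eigvecs P S"
    and complete: "\<And>i j. (\<Sum>s\<in>S. s $ i * cnj (s $ j)) = (if i = j then 1 else 0)"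
    using orthonormal_eigenbasis_exists[OF herm idem] by blast
  define R where "R = {s\<in>S. P *v s = s}"
  have "R \<subseteq> S" "finite S"
    using S by (auto simp: R_def orthonormal_eigvecs_def)
  have "(of_nat (card S) :: complex) = of_nat CARD('n)"
    using sum_orthonormal_eigvecs_diagonal[OF S order_refl] by (simp add: complete)
  moreover have "(of_nat (card R) :: complex) = of_nat k"
    using sum_orthonormal_eigvecs_diagonal[OF S \<open>R \<subseteq> S\<close>] tr
    by (simp add: mtrace_def R_def projection_eq_sum_eigvecs[OF S complete])
  ultimately obtain \<sigma> where \<sigma>: "bij_betw \<sigma> UNIV S" "bij_betw \<sigma> K R"
    using obtain_bij_betw_mapping_subset[OF \<open>finite S\<close> \<open>R \<subseteq> S\<close>] assms(2) of_nat_eq_iff by metis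
  define U :: "complex^'n^'n" where "U = (\<chi> i j. \<sigma> j $ i)"
  have "unitary U"
    unfolding U_def using unitary_of_orthonormal_columns[OF \<sigma>(1)] S complete
    by (simp add: orthonormal_eigvecs_def)
  moreover have "P = U ** coord_proj K ** adj U"
  proof -
    have "P $ i $ l = (\<Sum>j\<in>K. \<sigma> j $ i * cnj (\<sigma> j $ l))" for i l
      using projection_eq_sum_eigvecs[OF S complete, of i l]
        sum.reindex_bij_betw[OF \<sigma>(2), of "\<lambda>s. s $ i * cnj (s $ l)"]
      by (simp add: R_def)
    then show ?thesis
      by (simp add: vec_eq_iff coord_proj_conj_nth U_def)
  qed
  ultimately show ?thesis using that by blast
qed

lemma orth_proj_unitarily_similar:
  fixes P Q :: "complex^'n^'n"
  assumes "orth_proj k P" "orth_proj k Q" "k \<le> CARD('n)"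
  obtains V where "unitary V" "Q = V ** P ** adj V"
proof -
  obtain K :: "'n set" where K: "card K = k"
    using obtain_subset_with_card_n[of k "UNIV :: 'n set"] assms(3) by auto
  obtain U1 where U1: "unitary U1" "P = U1 ** coord_proj K ** adj U1"
    using orth_proj_unitarily_diagonal[OF assms(1) K] .
  obtain U2 where U2: "unitary U2" "Q = U2 ** coord_proj K ** adj U2"
    using orth_proj_unitarily_diagonal[OF assms(2) K] .
  have "Q = (U2 ** adj U1) ** P ** adj (U2 ** adj U1)"
    using U1 U2 by (simp add: adj_mult matrix_mul_assoc unitary_adj_mult_cancel)
  moreover have "unitary (U2 ** adj U1)"
    using U1 U2 by (simp add: unitary_mult unitary_adj)
  ultimately show ?thesis using that by blast
qed

lemma dim_span_SH_eq:
  fixes P Q :: "complex^'n^'n"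
  assumes "orth_proj k P" "orth_proj k Q" "k \<le> CARD('n)"
  shows "dim (span (SH k Q)) = dim (span (SH k P))"
  using orth_proj_unitarily_similar[OF assms] dim_span_SH_unitary_conj by metis

lemma subspace_Herm: "subspace Herm"
  unfolding subspace_def Herm_def hermitian_iff_adj
  by (simp add: adj_add adj_scaleR vec_eq_iff)

lemma linear_extension_from_Herm:
  fixes T :: "complex^'n^'n \<Rightarrow> 'a::real_vector"
  assumes add: "\<forall>A\<in>Herm. \<forall>B\<in>Herm. T (A + B) = T A + T B"
    and scale: "\<forall>r::real. \<forall>A\<in>Herm. T (r *\<^sub>R A) = r *\<^sub>R T A"
  obtains L where "linear L" "\<And>A. A \<in> Herm \<Longrightarrow> L A = T A"
proof
  define h :: "complex^'n^'n \<Rightarrow> complex^'n^'n" where "h X = (1/2) *\<^sub>R (X + adj X)" for X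
  have h_Herm: "h X \<in> Herm" for X
    by (simp add: Herm_def h_def hermitian_iff_adj adj_add adj_scaleR add.commute)
  have "h (X + Y) = h X + h Y" "h (r *\<^sub>R X) = r *\<^sub>R h X" for X Y r
    by (simp_all add: h_def adj_add adj_scaleR algebra_simps)
  then show "linear (T \<circ> h)"
    by (intro linearI) (simp_all add: add scale h_Herm)
  show "(T \<circ> h) A = T A" if "A \<in> Herm" for A
    using that by (simp add: Herm_def h_def hermitian_iff_adj)
qed

lemma image_subset_span_if_scaled_image_subset:
  assumes scale: "\<forall>r::real. \<forall>A\<in>H. T (r *\<^sub>R A) = r *\<^sub>R T A"
    and "S \<subseteq> H" "\<theta> \<noteq> 0"
    and sub: "T ` ((\<lambda>B. \<theta> *\<^sub>R B) ` S) \<subseteq> (\<lambda>B. \<theta>' *\<^sub>R B) ` C"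
  shows "T ` S \<subseteq> span C"
proof
  fix Y assume "Y \<in> T ` S"
  then obtain B where "B \<in> S" "Y = T B" by blast
  then obtain C' where "C' \<in> C" "T (\<theta> *\<^sub>R B) = \<theta>' *\<^sub>R C'"
    using sub by blast
  have "Y = (1 / \<theta>) *\<^sub>R T (\<theta> *\<^sub>R B)"
    using scale \<open>B \<in> S\<close> \<open>Y = T B\<close> assms(2,3) by auto
  also have "\<dots> = (\<theta>' / \<theta>) *\<^sub>R C'"
    using \<open>T (\<theta> *\<^sub>R B) = \<theta>' *\<^sub>R C'\<close> by simp
  finally show "Y \<in> span C"
    using \<open>C' \<in> C\<close> by (simp add: span_base span_mul)
qed

lemma span_eq_if_inj_linear_image_subset:
  fixes L :: "'a::euclidean_space \<Rightarrow> 'b::euclidean_space"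
  assumes "linear L" "inj_on L (span (A \<union> B))" "L ` (A \<union> B) \<subseteq> W"
    and "dim W \<le> dim A" "dim W \<le> dim B"
  shows "span A = span B"
proof -
  have "dim (A \<union> B) \<le> dim W"
    using dim_image_eq[OF assms(1,2)] dim_subset[OF assms(3)] by simp
  then have "span A = span (A \<union> B)" and "span B = span (A \<union> B)"
    using assms(4,5) by (auto intro!: dim_eq_span simp del: span_Un)
  then show ?thesis by simp
qed

lemma span_SH_eq_if_scaled_images_in_SH:
  fixes T :: "complex^'n^'n \<Rightarrow> complex^'n^'n" and P1 P2 Q :: "complex^'n^'n"
  assumes add: "\<forall>A\<in>Herm. \<forall>B\<in>Herm. T (A + B) = T A + T B"
    and scale: "\<forall>r::real. \<forall>A\<in>Herm. T (r *\<^sub>R A) = r *\<^sub>R T A"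
    and "inj_on T Herm"
    and P1: "orth_proj k P1" and P2: "orth_proj k P2" and Q: "orth_proj k Q"
    and "k \<le> CARD('n)" and "\<theta>1 \<noteq> 0" and "\<theta>2 \<noteq> 0"
    and incl1: "T ` ((\<lambda>B. \<theta>1 *\<^sub>R B) ` SH k P1) \<subseteq> (\<lambda>B. \<theta>3 *\<^sub>R B) ` SH k Q"
    and incl2: "T ` ((\<lambda>B. \<theta>2 *\<^sub>R B) ` SH k P2) \<subseteq> (\<lambda>B. \<theta>3 *\<^sub>R B) ` SH k Q"
  shows "span (SH k P1) = span (SH k P2)"
proof -
  obtain L where "linear L" and L_T: "\<And>A. A \<in> Herm \<Longrightarrow> L A = T A"
    using linear_extension_from_Herm add scale by blast
  have SH_Herm: "SH k P \<subseteq> Herm" for P :: "complex^'n^'n"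
    by (auto simp: SH_def)
  have "span (SH k P1 \<union> SH k P2) \<subseteq> Herm"
    using SH_Herm by (intro span_minimal subspace_Herm) blast
  then have "inj_on L (span (SH k P1 \<union> SH k P2))"
    using \<open>inj_on T Herm\<close> L_T by (metis inj_on_cong inj_on_subset subsetD)
  moreover have "L ` (SH k P1 \<union> SH k P2) \<subseteq> span (SH k Q)"
  proof -
    have "T ` SH k P1 \<subseteq> span (SH k Q)" "T ` SH k P2 \<subseteq> span (SH k Q)"
      using image_subset_span_if_scaled_image_subset[OF scale SH_Herm] assms(8-11) by blast+
    moreover have "L ` (SH k P1 \<union> SH k P2) = T ` (SH k P1 \<union> SH k P2)"
      using L_T SH_Herm by (intro image_cong) auto
    ultimately show ?thesis by (simp add: image_Un)
  qed
  moreover have "dim (span (SH k Q)) \<le> dim (SH k P1)" "dim (span (SH k Q)) \<le> dim (SH k P2)"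
    using dim_span_SH_eq[OF P1 Q \<open>k \<le> CARD('n)\<close>] dim_span_SH_eq[OF P2 Q \<open>k \<le> CARD('n)\<close>]
    by (simp_all add: dim_span)
  ultimately show ?thesis
    using span_eq_if_inj_linear_image_subset[OF \<open>linear L\<close>] by blast
qed

theorem mainTheorem11:
  fixes T :: "complex ^'n ^'n \<Rightarrow> complex ^'n ^'n"
    and k :: nat and P1 P2 :: "complex ^'n ^'n" and \<theta>1 \<theta>2 :: real
  assumes "1 \<le> k" and "k < CARD('n)"
    and "\<forall>A\<in>Herm. \<forall>B\<in>Herm. T (A + B) = T A + T B"
    and "\<forall>r::real. \<forall>A\<in>Herm. T (r *\<^sub>R A) = r *\<^sub>R T A"
    and "bij_betw T Herm Herm"
    and "orth_proj k P1" and "orth_proj k P2"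
    and "span (SH k P1) \<noteq> span (SH k P2)"
    and "\<theta>1 \<in> {-1, 1}" and "\<theta>2 \<in> {-1, 1}"
  shows "\<not> (\<exists>Q \<theta>3. orth_proj k Q \<and> \<theta>3 \<in> {-1, 1::real} \<and>
            T ` ((\<lambda>B. \<theta>1 *\<^sub>R B) ` SH k P1) \<union> T ` ((\<lambda>B. \<theta>2 *\<^sub>R B) ` SH k P2)
              \<subseteq> (\<lambda>B. \<theta>3 *\<^sub>R B) ` SH k Q)"
proof -
  have "k \<le> CARD('n)" "\<theta>1 \<noteq> 0" "\<theta>2 \<noteq> 0"
    using assms(2,9,10) by auto
  then show ?thesis
    using span_SH_eq_if_scaled_images_in_SH[OF assms(3,4) bij_betw_imp_inj_on[OF assms(5)] assms(6,7)]
      assms(8) by (auto simp: Un_subset_iff)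
qed

end
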